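(* Let $N\ge2$ be even, let $\phi$ lie in the closed interval with endpoints $0$ and $\phi^*_N$, let $\theta=\theta(\phi)$, and let $\phi'=N\phi/2$, $\theta'=\theta-\frac{N-2}2\phi$. Then $(\phi',\theta')\in\mathcal F$.
   Context: $\mathcal G=(\pi/4,\pi/2)\cup(\pi/2,3\pi/4)\cup(5\pi/4,3\pi/2)\cup(3\pi/2,7\pi/4)$, $\mathcal F=\big[(-\pi/4,\pi/4)\times\mathcal G\big]\cup\big[((-\pi/4,\pi/4)\setminus\{0\})\times\{\pi/2,3\pi/2\}\big]$. $\theta^*_N=2\pi t_N/(N+1)$ with $t_N=N/4+1/2,\ N/4,\ 3N/4+1/2,\ 3N/4+1$ for $N\equiv2,4,6,0\pmod8$; $\theta(\phi)=\frac{N-1}{N+1}\phi+\theta^*_N$; $\phi^*_N=\mathrm{sgn}[\sin(2\theta^*_N)]\frac{\pi}{4N}$. *)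

theory Defs
  imports Complex_Main
begin

definition G_set :: "real set" where
  "G_set = {pi/4<..<pi/2} \<union> {pi/2<..<3*pi/4} \<union> {5*pi/4<..<3*pi/2} \<union> {3*pi/2<..<7*pi/4}"

definition F_set :: "(real \<times> real) set" where
  "F_set = ({-pi/4<..<pi/4} \<times> G_set) \<union> (({-pi/4<..<pi/4} - {0}) \<times> {pi/2, 3*pi/2})"

definition t_N :: "nat \<Rightarrow> real" where
  "t_N N = (if N mod 8 = 2 then real N / 4 + 1/2
            else if N mod 8 = 4 then real N / 4
            else if N mod 8 = 6 then 3 * real N / 4 + 1/2
            else 3 * real N / 4 + 1)"

definition theta_star :: "nat \<Rightarrow> real" where
  "theta_star N = 2 * pi * t_N N / (real N + 1)"

definition theta_of :: "nat \<Rightarrow> real \<Rightarrow> real" where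
  "theta_of N \<phi> = (real N - 1) / (real N + 1) * \<phi> + theta_star N"

definition phi_star :: "nat \<Rightarrow> real" where
  "phi_star N = sgn (sin (2 * theta_star N)) * (pi / (4 * real N))"

end

theory Submission
  imports Defs
begin

text \<open>
  Write \<open>\<delta> = \<pi>/(2(N+1))\<close>. In each residue class of \<open>N\<close> mod 8 one has
  \<open>\<theta>\<^sup>*\<^sub>N = b + s\<delta>\<close> with \<open>b \<in> {\<pi>/2, 3\<pi>/2}\<close> and \<open>s = \<plusminus>1\<close>, hence
  \<open>sin (2\<theta>\<^sup>*\<^sub>N) = -s sin (2\<delta>)\<close>, so \<open>\<phi>\<^sup>*\<^sub>N = -s\<pi>/(4N)\<close> and \<open>\<phi> = -s u\<close> with
  \<open>0 \<le> u \<le> \<pi>/(4N)\<close>.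
  Then \<open>\<theta>' = b + s (\<delta> - c u)\<close> with \<open>c = (N-1)/(N+1) - (N-2)/2\<close>, and the whole
  point is that \<open>0 < \<delta> - c u < \<pi>/4\<close>: for \<open>N \<ge> 3\<close> the coefficient \<open>c\<close> is
  non-positive, so the perturbation moves \<open>\<theta>'\<close> away from the excluded line
  \<open>\<theta> = b\<close>, and for \<open>N = 2\<close> it is too small to reach it.
\<close>

lemma offset_mem_G_set:
  assumes "b \<in> {pi/2, 3*pi/2}" and "s \<in> {-1, 1}" and "x \<in> {0<..<pi/4}"
  shows "b + s * x \<in> G_set"
  using assms pi_gt_zero unfolding G_set_def by auto

lemma theta_star_decomposition:
  assumes "even N"
  obtains b s where "b \<in> {pi/2, 3*pi/2}" and "s \<in> {-1, 1}"
    and "theta_star N = b + s * (pi / (2 * (real N + 1)))"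
proof -
  have "N mod 8 = 2 \<or> N mod 8 = 4 \<or> N mod 8 = 6 \<or> N mod 8 = 0"
    using assms by presburger
  then have "\<exists>b s. b \<in> {pi/2, 3*pi/2} \<and> s \<in> {-1, 1::real} \<and>
      theta_star N = b + s * (pi / (2 * (real N + 1)))"
  proof (elim disjE)
    assume "N mod 8 = 2"
    then have "theta_star N = pi/2 + 1 * (pi / (2 * (real N + 1)))"
      unfolding theta_star_def t_N_def by (simp add: field_simps)
    then show ?thesis by blast
  next
    assume "N mod 8 = 4"
    then have "theta_star N = pi/2 + (-1) * (pi / (2 * (real N + 1)))"
      unfolding theta_star_def t_N_def by (simp add: field_simps)
    then show ?thesis by blast
  next
    assume "N mod 8 = 6"
    then have "theta_star N = 3*pi/2 + (-1) * (pi / (2 * (real N + 1)))"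
      unfolding theta_star_def t_N_def by (simp add: field_simps)
    then show ?thesis by blast
  next
    assume "N mod 8 = 0"
    then have "theta_star N = 3*pi/2 + 1 * (pi / (2 * (real N + 1)))"
      unfolding theta_star_def t_N_def by (simp add: field_simps)
    then show ?thesis by blast
  qed
  then show ?thesis using that by blast
qed

lemma sin_double_offset:
  assumes "b \<in> {pi/2, 3*pi/2}"
  shows "sin (2 * (b + x)) = - sin (2 * x)"
proof -
  consider "2 * (b + x) = 2 * x + pi" | "2 * (b + x) = (2 * x + pi) + 2 * pi"
    using assms by (auto simp: algebra_simps)
  then show ?thesis by cases (simp_all only: sin_periodic sin_periodic_pi)
qed

lemma phi_star_eq:
  assumes "N \<ge> 2" and "b \<in> {pi/2, 3*pi/2}" and "s \<in> {-1, 1}"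
    and "theta_star N = b + s * (pi / (2 * (real N + 1)))"
  shows "phi_star N = - s * (pi / (4 * real N))"
proof -
  have "0 < pi / (real N + 1)" and "pi / (real N + 1) < pi"
    using assms(1) by (auto simp: field_simps)
  then have "sin (pi / (real N + 1)) > 0" by (rule sin_gt_zero)
  moreover have "sin (2 * theta_star N) = - s * sin (pi / (real N + 1))"
  proof -
    have "2 * (s * (pi / (2 * (real N + 1)))) = s * (pi / (real N + 1))"
      by (simp add: field_simps)
    then show ?thesis
      using assms(3) unfolding assms(4) sin_double_offset[OF assms(2)] by auto
  qed
  ultimately have "sgn (sin (2 * theta_star N)) = - s"
    using assms(3) by (auto simp: sgn_mult)
  then show ?thesis unfolding phi_star_def by simp
qed

lemma offset_bounds:
  fixes N :: nat and u :: real
  assumes "N \<ge> 2" and "0 \<le> u" and "u \<le> pi / (4 * real N)"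
  defines "c \<equiv> (real N - 1) / (real N + 1) - (real N - 2) / 2"
  shows "pi / (2 * (real N + 1)) - c * u \<in> {0<..<pi/4}"
proof -
  consider "N = 2" | "N \<ge> 3" using assms(1) by linarith
  then show ?thesis
  proof cases
    case 1
    then have "c = 1/3" unfolding c_def by simp
    then have "c * u = u / 3" by simp
    moreover have "pi / (2 * (real N + 1)) = pi / 6" and "u \<le> pi / 8"
      using 1 assms(3) by simp_all
    ultimately show ?thesis
      using assms(2) pi_gt_zero unfolding greaterThanLessThan_iff by (intro conjI) linarith+
  next
    case 2
    have "c \<le> 0" and "- c \<le> (real N - 2) / 2"
      using 2 unfolding c_def by (simp_all add: field_simps)
    then have "- c * u \<le> (real N - 2) / 2 * (pi / (4 * real N))"
      using assms(2,3) 2 by (intro mult_mono) auto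
    also have "\<dots> < pi/8" using 2 by (simp add: field_simps)
    finally have "- c * u < pi/8" .
    moreover have "0 < pi / (2 * (real N + 1))" and "pi / (2 * (real N + 1)) \<le> pi/8"
      using 2 by (simp_all add: field_simps)
    moreover have "0 \<le> - c * u"
      using \<open>c \<le> 0\<close> assms(2) by (simp add: mult_nonpos_nonneg)
    ultimately show ?thesis unfolding greaterThanLessThan_iff by (intro conjI) linarith+
  qed
qed

theorem proposition7:
  fixes N :: nat and \<phi> :: real
  assumes "N \<ge> 2" and "even N"
    and "\<phi> \<in> {min 0 (phi_star N) .. max 0 (phi_star N)}"
  shows "(real N * \<phi> / 2, theta_of N \<phi> - (real N - 2) / 2 * \<phi>) \<in> F_set"
proof -
  obtain b s where b: "b \<in> {pi/2, 3*pi/2}" and s: "s \<in> {-1, 1}"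
    and \<theta>: "theta_star N = b + s * (pi / (2 * (real N + 1)))"
    using theta_star_decomposition[OF assms(2)] .
  define u where "u = - s * \<phi>"
  have "phi_star N = - s * (pi / (4 * real N))" using phi_star_eq[OF assms(1) b s \<theta>] .
  moreover have "0 < pi / (4 * real N)" using assms(1) by simp
  ultimately have u: "0 \<le> u" "u \<le> pi / (4 * real N)" and \<phi>: "\<phi> = - s * u"
    using assms(3) s pi_gt_zero unfolding u_def by (auto simp: min_def max_def)
  have "\<bar>real N * \<phi> / 2\<bar> \<le> pi/8"
    using u s assms(1) by (auto simp: \<phi> abs_mult field_simps)
  then have first_component: "real N * \<phi> / 2 \<in> {-pi/4<..<pi/4}"
    using pi_gt_zero unfolding abs_le_iff greaterThanLessThan_iff by linarith
  define c where "c = (real N - 1) / (real N + 1) - (real N - 2) / 2"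
  have "theta_of N \<phi> - (real N - 2) / 2 * \<phi> = theta_star N + c * \<phi>"
    unfolding theta_of_def c_def by (simp add: algebra_simps)
  also have "\<dots> = b + s * (pi / (2 * (real N + 1)) - c * u)"
    unfolding \<theta> \<phi> by (simp add: algebra_simps)
  also have "\<dots> \<in> G_set"
    using offset_mem_G_set[OF b s] offset_bounds[OF assms(1) u, folded c_def] by blast
  finally show ?thesis using first_component unfolding F_set_def by blast
qed

end
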